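(* Let $\mathbb{A}=(A,\backslash,/)$ be a residuation algebra that has no zero-divisors and satisfies $a\backslash(b\vee c)\leq(a\backslash b)\vee(a\backslash c)$ for all $a,b,c\in A$. Then the dual structure $\mathbb{A}^\delta_+$ is total, i.e. $y\cdot z\in J^\infty(A^\delta)$ for all $y,z\in J^\infty(A^\delta)$.
   Context: A residuation algebra is a structure $(A,\backslash,/)$ where $A$ is a bounded distributive lattice and $\backslash,/$ are binary operations on $A$ such that $\backslash$ preserves finite (including empty) meets in its second coordinate, $/$ preserves finite (including empty) meets in its first coordinate, and for all $a,b,c\in A$: $b\leq a\backslash c$ iff $a\leq c/b$. The canonical extension $A^\delta$ of $A$ is the complete lattice containing $A$ as a sublattice that is dense (every element is a join of meets and a meet of joins of elements of $A$) and compact (if $\bigwedge S\leq\bigvee T$ for $S,T\subseteq A$ then this holds for some finite subsets). Let $K(A^\delta)$ (resp. $O(A^\delta)$) be the set of meets (resp. joins) of subsets of $A$. The $\pi$-extension of $\backslash$ is: for $k\in K(A^\delta)$, $o\in O(A^\delta)$, $k\backslash^\pi o=\bigvee\{a\backslash b\mid a,b\in A,\ k\leq a,\ b\leq o\}$, and for arbitrary $u,v$, $u\backslash^\pi v=\bigwedge\{k\backslash^\pi o\mid k\in K(A^\delta), o\in O(A^\delta), k\leq u, v\leq o\}$; $/^\pi$ is defined symmetrically. There is a binary operation $\cdot$ on $A^\delta$ such that for all $u,v,w\in A^\delta$: $v\leq u\backslash^\pi w$ iff $u\cdot v\leq w$ iff $u\leq w/^\pi v$. $J^\infty(A^\delta)$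 is the set of completely join-irreducible elements of $A^\delta$. The dual structure $\mathbb{A}^\delta_+$ is $(J^\infty(A^\delta),\geq,R)$ with $R(x,y,z)$ iff $x\leq y\cdot z$; it is total if $y\cdot z\in J^\infty(A^\delta)$ for all $y,z\in J^\infty(A^\delta)$. $\mathbb{A}$ has no zero-divisors if $x\cdot y\neq\bot$ for all $x,y\in J^\infty(A^\delta)$. *)

theory Defs
  imports Main
begin

definition residuation_algebra ::
  "('a::{distrib_lattice,bounded_lattice} \<Rightarrow> 'a \<Rightarrow> 'a) \<Rightarrow> ('a \<Rightarrow> 'a \<Rightarrow> 'a) \<Rightarrow> bool" where
  "residuation_algebra ldiv rdiv \<longleftrightarrow>
     (\<forall>a. ldiv a top = top) \<and>
     (\<forall>a b c. ldiv a (inf b c) = inf (ldiv a b) (ldiv a c)) \<and>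
     (\<forall>a. rdiv top a = top) \<and>
     (\<forall>a b c. rdiv (inf b c) a = inf (rdiv b a) (rdiv c a)) \<and>
     (\<forall>a b c. b \<le> ldiv a c \<longleftrightarrow> a \<le> rdiv c b)"

definition closed_elems :: "('a \<Rightarrow> 'c::complete_lattice) \<Rightarrow> 'c set" where
  "closed_elems e = {Inf (e ` S) | S. True}"

definition open_elems :: "('a \<Rightarrow> 'c::complete_lattice) \<Rightarrow> 'c set" where
  "open_elems e = {Sup (e ` S) | S. True}"

text \<open>e embeds the bounded lattice A as a bounded sublattice of the complete lattice C,
  densely and compactly: C is (up to isomorphism) the canonical extension of A.\<close>
definition canonical_extension ::
  "('a::{distrib_lattice,bounded_lattice} \<Rightarrow> 'c::complete_lattice) \<Rightarrow> bool" where
  "canonical_extension e \<longleftrightarrow>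
     inj e \<and>
     (\<forall>a b. e (inf a b) = inf (e a) (e b)) \<and>
     (\<forall>a b. e (sup a b) = sup (e a) (e b)) \<and>
     e bot = bot \<and> e top = top \<and>
     (\<forall>u. (\<exists>X \<subseteq> closed_elems e. u = Sup X) \<and> (\<exists>Y \<subseteq> open_elems e. u = Inf Y)) \<and>
     (\<forall>S T. Inf (e ` S) \<le> Sup (e ` T) \<longrightarrow>
        (\<exists>S' T'. finite S' \<and> S' \<subseteq> S \<and> finite T' \<and> T' \<subseteq> T \<and> Inf (e ` S') \<le> Sup (e ` T')))"

definition ldiv_KO ::
  "('a \<Rightarrow> 'c::complete_lattice) \<Rightarrow> ('a \<Rightarrow> 'a \<Rightarrow> 'a) \<Rightarrow> 'c \<Rightarrow> 'c \<Rightarrow> 'c" where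
  "ldiv_KO e ldiv k p = Sup {e (ldiv a b) | a b. k \<le> e a \<and> e b \<le> p}"

definition ldiv_pi ::
  "('a \<Rightarrow> 'c::complete_lattice) \<Rightarrow> ('a \<Rightarrow> 'a \<Rightarrow> 'a) \<Rightarrow> 'c \<Rightarrow> 'c \<Rightarrow> 'c" where
  "ldiv_pi e ldiv u v = Inf {ldiv_KO e ldiv k p | k p.
      k \<in> closed_elems e \<and> p \<in> open_elems e \<and> k \<le> u \<and> v \<le> p}"

definition rdiv_OK ::
  "('a \<Rightarrow> 'c::complete_lattice) \<Rightarrow> ('a \<Rightarrow> 'a \<Rightarrow> 'a) \<Rightarrow> 'c \<Rightarrow> 'c \<Rightarrow> 'c" where
  "rdiv_OK e rdiv p k = Sup {e (rdiv b a) | a b. k \<le> e a \<and> e b \<le> p}"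

definition rdiv_pi ::
  "('a \<Rightarrow> 'c::complete_lattice) \<Rightarrow> ('a \<Rightarrow> 'a \<Rightarrow> 'a) \<Rightarrow> 'c \<Rightarrow> 'c \<Rightarrow> 'c" where
  "rdiv_pi e rdiv u v = Inf {rdiv_OK e rdiv p k | p k.
      p \<in> open_elems e \<and> k \<in> closed_elems e \<and> u \<le> p \<and> k \<le> v}"

text \<open>x is completely join-irreducible iff whenever x is the join of a set S, x belongs to S
  (this excludes bot = Sup {}).\<close>
definition compl_join_irred :: "'c::complete_lattice \<Rightarrow> bool" where
  "compl_join_irred x \<longleftrightarrow> (\<forall>S. x = Sup S \<longrightarrow> x \<in> S)"

end

theory Submission
  imports Defs
begin

text \<open>A completely join-irreducible element of the canonical extension is closed, and
  compactness together with the distributivity of \<open>A\<close> makes it completely join-prime for joins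
  of elements of \<open>A\<close>. Let \<open>y, z\<close> be completely join-irreducible with \<open>y \<cdot> z \<le> \<Squnion>S\<close>, i.e.
  \<open>z \<le> y \<setminus>\<^sup>\<pi> \<Squnion>S\<close>, and suppose \<open>z \<le> y \<setminus>\<^sup>\<pi> s\<close> fails for all \<open>s \<in> S\<close>. Let \<open>U\<close> be the set of
  \<open>b \<in> A\<close> such that \<open>z\<close> is not below \<open>\<Squnion>{a \<setminus> b' | y \<le> a, b' \<le> b}\<close>. Unfolding the
  \<open>\<pi>\<close>-extension, every \<open>s\<close> lies below \<open>\<Squnion>U\<close>, so \<open>z \<le> y \<setminus>\<^sup>\<pi> \<Squnion>U\<close>; as \<open>y\<close> is closed, primeness of
  \<open>z\<close> gives \<open>a\<close> above \<open>y\<close> and \<open>b\<close> below \<open>\<Squnion>U\<close> with \<open>z \<le> a \<setminus> b\<close>. By compactness \<open>b\<close> is below a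
  finite join of elements of \<open>U\<close>, and since \<open>a \<setminus> -\<close> preserves binary joins, primeness of \<open>z\<close>
  gives either \<open>z \<le> a \<setminus> \<bottom>\<close>, which forces \<open>y \<cdot> z = \<bottom>\<close>, or \<open>z \<le> a \<setminus> u\<close> for some \<open>u \<in> U\<close>,
  contradicting \<open>u \<in> U\<close>.\<close>

lemma compl_join_irred_if_join_prime:
  fixes x :: "'c::complete_lattice"
  assumes "\<And>S. x \<le> Sup S \<Longrightarrow> \<exists>s\<in>S. x \<le> s"
  shows "compl_join_irred x"
  unfolding compl_join_irred_def
proof (intro allI impI)
  fix S assume x: "x = Sup S"
  then obtain s where "s \<in> S" "x \<le> s" using assms by blast
  with x show "x \<in> S" by (metis Sup_upper antisym)
qed

lemma compl_join_irred_not_bot: "compl_join_irred x \<Longrightarrow> x \<noteq> bot"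
  unfolding compl_join_irred_def by force

lemma residuation_algebra_ldiv_sup:
  assumes ra: "residuation_algebra ldiv rdiv"
    and distr: "\<And>a b c. ldiv a (sup b c) \<le> sup (ldiv a b) (ldiv a c)"
  shows "ldiv a (sup b c) = sup (ldiv a b) (ldiv a c)"
proof -
  have mono: "ldiv a b \<le> ldiv a c" if "b \<le> c" for b c
  proof -
    have "ldiv a b = ldiv a (inf b c)" using that by (simp add: inf.absorb1)
    also have "\<dots> = inf (ldiv a b) (ldiv a c)" using ra unfolding residuation_algebra_def by blast
    finally show ?thesis by (metis inf.cobounded2)
  qed
  show ?thesis by (rule antisym) (simp_all add: distr mono)
qed

lemma ldiv_KO_mono: "k' \<le> k \<Longrightarrow> p \<le> p' \<Longrightarrow> ldiv_KO e ldiv k p \<le> ldiv_KO e ldiv k' p'"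
  unfolding ldiv_KO_def by (rule Sup_subset_mono) (blast intro: order_trans)

lemma e_ldiv_le_ldiv_KO: "k \<le> e a \<Longrightarrow> e b \<le> p \<Longrightarrow> e (ldiv a b) \<le> ldiv_KO e ldiv k p"
  unfolding ldiv_KO_def by (rule Sup_upper) blast

lemma e_ldiv_le_ldiv_pi: "u \<le> e a \<Longrightarrow> e b \<le> v \<Longrightarrow> e (ldiv a b) \<le> ldiv_pi e ldiv u v"
  unfolding ldiv_pi_def by (rule Inf_greatest) (auto intro: e_ldiv_le_ldiv_KO order_trans)

lemma ldiv_pi_mono_right: "v \<le> v' \<Longrightarrow> ldiv_pi e ldiv u v \<le> ldiv_pi e ldiv u v'"
  unfolding ldiv_pi_def by (rule Inf_superset_mono) (blast intro: order_trans)

lemma ldiv_pi_le_ldiv_KO: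
  "u \<in> closed_elems e \<Longrightarrow> p \<in> open_elems e \<Longrightarrow> v \<le> p \<Longrightarrow> ldiv_pi e ldiv u v \<le> ldiv_KO e ldiv u p"
  unfolding ldiv_pi_def by (rule Inf_lower) blast

lemma not_le_ldiv_pi_imp_le_Sup:
  assumes "\<not> z \<le> ldiv_pi e ldiv u v"
  shows "v \<le> Sup (e ` {b. \<not> z \<le> ldiv_KO e ldiv u (e b)})"
proof -
  obtain k p where kp: "k \<le> u" "p \<in> open_elems e" "v \<le> p" and z: "\<not> z \<le> ldiv_KO e ldiv k p"
    using assms unfolding ldiv_pi_def by (blast intro: Inf_greatest)
  then obtain B where p: "p = Sup (e ` B)" unfolding open_elems_def by blast
  have "B \<subseteq> {b. \<not> z \<le> ldiv_KO e ldiv u (e b)}"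
  proof
    fix b assume "b \<in> B"
    then have "ldiv_KO e ldiv u (e b) \<le> ldiv_KO e ldiv k p"
      using p kp(1) by (intro ldiv_KO_mono) (auto intro: Sup_upper)
    then show "b \<in> {b. \<not> z \<le> ldiv_KO e ldiv u (e b)}" using z by (auto dest: order_trans)
  qed
  then show ?thesis using kp(3) p by (meson Sup_subset_mono image_mono order_trans)
qed

locale canonical_embedding =
  fixes e :: "'a::{distrib_lattice,bounded_lattice} \<Rightarrow> 'c::complete_lattice"
  assumes canonical: "canonical_extension e"
begin

lemma e_inf: "e (inf a b) = inf (e a) (e b)"
  and e_sup: "e (sup a b) = sup (e a) (e b)"
  and e_bot [simp]: "e bot = bot"
  and e_top: "e top = top"
  using canonical unfolding canonical_extension_def by blast+

lemma e_le_iff [simp]: "e a \<le> e b \<longleftrightarrow> a \<le> b"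
proof
  assume "e a \<le> e b"
  then have "e (inf a b) = e a" by (simp add: e_inf inf.absorb1)
  then have "inf a b = a" using canonical unfolding canonical_extension_def by (meson injD)
  then show "a \<le> b" by (metis inf.cobounded2)
next
  assume "a \<le> b"
  then show "e a \<le> e b" by (metis e_sup sup.absorb2 sup.cobounded1)
qed

lemma dense_open: "\<exists>Y \<subseteq> open_elems e. u = Inf Y"
  using canonical unfolding canonical_extension_def by blast

lemma dense_closed: "\<exists>X \<subseteq> closed_elems e. u = Sup X"
  using canonical unfolding canonical_extension_def by blast

lemma compact:
  "Inf (e ` S) \<le> Sup (e ` T) \<Longrightarrow>
    \<exists>S' T'. finite S' \<and> S' \<subseteq> S \<and> finite T' \<and> T' \<subseteq> T \<and> Inf (e ` S') \<le> Sup (e ` T')"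
  using canonical unfolding canonical_extension_def by blast

lemma e_closed: "e a \<in> closed_elems e"
  unfolding closed_elems_def by (auto intro: exI[of _ "{a}"])

lemma Inf_image_finite: "finite S \<Longrightarrow> \<exists>a. e a = Inf (e ` S)"
proof (induction S rule: finite_induct)
  case empty
  show ?case by (metis Inf_empty e_top image_empty)
next
  case (insert x F)
  then show ?case by (metis Inf_insert e_inf image_insert)
qed

lemma Sup_image_finite: "finite T \<Longrightarrow> \<exists>a. e a = Sup (e ` T)"
proof (induction T rule: finite_induct)
  case empty
  show ?case by (metis Sup_empty e_bot image_empty)
next
  case (insert x F)
  then show ?case by (metis Sup_insert e_sup image_insert)
qed

lemma closed_le_Sup_image_finite:
  assumes "x \<in> closed_elems e" and "x \<le> Sup (e ` T)"
  shows "\<exists>T'. finite T' \<and> T' \<subseteq> T \<and> x \<le> Sup (e ` T')"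
proof -
  obtain X where X: "x = Inf (e ` X)" using assms(1) unfolding closed_elems_def by blast
  then obtain S' T' where "S' \<subseteq> X" "finite T'" "T' \<subseteq> T" "Inf (e ` S') \<le> Sup (e ` T')"
    using compact assms(2) by metis
  moreover have "x \<le> Inf (e ` S')" using X \<open>S' \<subseteq> X\<close> by (simp add: Inf_superset_mono image_mono)
  ultimately show ?thesis by (meson order_trans)
qed

lemma compl_join_irred_closed: "compl_join_irred x \<Longrightarrow> x \<in> closed_elems e"
  using dense_closed unfolding compl_join_irred_def by blast

lemma inf_closed_le_open:
  assumes "x \<in> closed_elems e" and "p \<in> open_elems e" and "inf x (e a) \<le> p"
  shows "\<exists>a'. x \<le> e a' \<and> e (inf a' a) \<le> p"
proof -
  obtain X T where X: "x = Inf (e ` X)" and T: "p = Sup (e ` T)"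
    using assms(1,2) unfolding closed_elems_def open_elems_def by blast
  have "Inf (e ` insert a X) \<le> Sup (e ` T)" using assms(3) X T by (simp add: inf_commute)
  then obtain S' T' where S': "finite S'" "S' \<subseteq> insert a X" and T': "T' \<subseteq> T"
    and le: "Inf (e ` S') \<le> Sup (e ` T')"
    using compact by metis
  obtain a' where a': "e a' = Inf (e ` (S' - {a}))" using Inf_image_finite S'(1) by blast
  have "S' - {a} \<subseteq> X" using S'(2) by blast
  then have "x \<le> e a'" using X a' by (simp add: Inf_superset_mono image_mono)
  moreover have "e (inf a' a) \<le> Inf (e ` S')"
  proof (rule Inf_greatest)
    fix w assume "w \<in> e ` S'"
    then consider "w = e a" | s where "s \<in> S' - {a}" "w = e s" by blast
    then show "e (inf a' a) \<le> w"
      by cases (simp_all add: e_inf a' le_infI1 Inf_lower)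
  qed
  then have "e (inf a' a) \<le> p" using le T T' by (meson Sup_subset_mono image_mono order_trans)
  ultimately show ?thesis by blast
qed

text \<open>The complete lattice \<open>C\<close> is not assumed distributive; this is the instance of
  distributivity that density and compactness transfer from \<open>A\<close>.\<close>

lemma closed_le_sup_image:
  assumes x: "x \<in> closed_elems e" and le: "x \<le> sup (e a) (e b)"
  shows "x \<le> sup (inf x (e a)) (inf x (e b))"
proof -
  obtain Y where Y: "Y \<subseteq> open_elems e" "sup (inf x (e a)) (inf x (e b)) = Inf Y"
    using dense_open by blast
  have "x \<le> p" if "p \<in> Y" for p
  proof -
    have "inf x (e a) \<le> p" "inf x (e b) \<le> p" using Y that by (metis Inf_lower le_sup_iff)+
    moreover have p: "p \<in> open_elems e" using Y that by blast
    ultimately obtain a1 a2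
      where a1: "x \<le> e a1" "e (inf a1 a) \<le> p" and a2: "x \<le> e a2" "e (inf a2 b) \<le> p"
      using inf_closed_le_open[OF x p] by metis
    have "x \<le> e (inf (inf a1 a2) (sup a b))" using a1 a2 le by (simp add: e_inf e_sup)
    also have "\<dots> = sup (e (inf (inf a1 a2) a)) (e (inf (inf a1 a2) b))"
      by (simp add: inf_sup_distrib1 e_sup)
    also have "\<dots> \<le> sup (e (inf a1 a)) (e (inf a2 b))"
      by (intro sup_mono) (simp_all add: le_infI1 inf.coboundedI2)
    also have "\<dots> \<le> p" using a1 a2 by simp
    finally show ?thesis .
  qed
  then show ?thesis using Y by (simp add: Inf_greatest)
qed

lemma compl_join_irred_le_sup_image:
  assumes x: "compl_join_irred x" and le: "x \<le> sup (e a) (e b)"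
  shows "x \<le> e a \<or> x \<le> e b"
proof -
  have "x = Sup {inf x (e a), inf x (e b)}"
    using closed_le_sup_image[OF compl_join_irred_closed[OF x] le] by (simp add: antisym)
  then have "x \<in> {inf x (e a), inf x (e b)}" using x unfolding compl_join_irred_def by blast
  then show ?thesis by (metis inf.absorb_iff1 insert_iff singletonD)
qed

lemma compl_join_irred_le_Sup_image:
  assumes x: "compl_join_irred x" and le: "x \<le> Sup (e ` T)"
  shows "\<exists>t\<in>T. x \<le> e t"
proof -
  have finite_case: "\<exists>t\<in>F. x \<le> e t" if "finite F" "x \<le> Sup (e ` F)" for F
    using that
  proof (induction F rule: finite_induct)
    case empty
    then show ?case using compl_join_irred_not_bot[OF x] by (simp add: bot_unique)
  next
    case (insert t F)
    obtain c where c: "e c = Sup (e ` F)" using Sup_image_finite insert(1) by blast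
    then have "x \<le> e t \<or> x \<le> e c"
      using insert(4) compl_join_irred_le_sup_image[OF x, of t c] by simp
    then show ?case using insert c by auto
  qed
  obtain T' where "finite T'" "T' \<subseteq> T" "x \<le> Sup (e ` T')"
    using closed_le_Sup_image_finite[OF compl_join_irred_closed[OF x] le] by blast
  then show ?thesis using finite_case by blast
qed

lemma sup_hom_le_Sup_image:
  assumes f_sup: "\<And>b c. f (sup b c) = sup (f b) (f c)"
  shows "finite U \<Longrightarrow> e b \<le> Sup (e ` U) \<Longrightarrow> e (f b) \<le> Sup (e ` f ` insert bot U)"
proof (induction U arbitrary: b rule: finite_induct)
  case empty
  then have "b = bot" by (metis Sup_empty e_bot e_le_iff bot_unique image_empty)
  then show ?case by simp
next
  case (insert u F)
  obtain d where d: "e d = Sup (e ` F)" using Sup_image_finite insert(1) by blast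
  have "e b \<le> e (sup u d)" using insert(4) d by (simp add: e_sup)
  then have "b \<le> sup u d" by simp
  then have "f b \<le> sup (f u) (f d)" by (metis f_sup sup.absorb_iff2 sup.cobounded1)
  then have "e (f b) \<le> sup (e (f u)) (e (f d))" by (simp add: e_sup[symmetric])
  moreover have "e (f d) \<le> Sup (e ` f ` insert bot F)" using insert(3) d by simp
  moreover have "Sup (e ` f ` insert bot F) \<le> Sup (e ` f ` insert bot (insert u F))"
    by (rule Sup_subset_mono) auto
  moreover have "e (f u) \<le> Sup (e ` f ` insert bot (insert u F))" by (rule Sup_upper) simp
  ultimately show ?case by (meson le_sup_iff order_trans)
qed

lemma le_ldiv_pi_Sup_image_cases:
  assumes ldiv_sup: "\<And>a b c. ldiv a (sup b c) = sup (ldiv a b) (ldiv a c)"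
    and y: "y \<in> closed_elems e" and z: "compl_join_irred z"
    and le: "z \<le> ldiv_pi e ldiv y (Sup (e ` U))"
  shows "z \<le> ldiv_pi e ldiv y bot \<or> (\<exists>u\<in>U. z \<le> ldiv_KO e ldiv y (e u))"
proof -
  have "z \<le> ldiv_KO e ldiv y (Sup (e ` U))"
    using le ldiv_pi_le_ldiv_KO[OF y] unfolding open_elems_def by (blast intro: order_trans)
  also have "\<dots> = Sup (e ` {ldiv a b | a b. y \<le> e a \<and> e b \<le> Sup (e ` U)})"
    unfolding ldiv_KO_def by (rule arg_cong[where f = Sup]) blast
  finally obtain a b where a: "y \<le> e a" and b: "e b \<le> Sup (e ` U)" and zab: "z \<le> e (ldiv a b)"
    using compl_join_irred_le_Sup_image[OF z] by blast
  obtain U' where U': "finite U'" "U' \<subseteq> U" "e b \<le> Sup (e ` U')"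
    using closed_le_Sup_image_finite[OF e_closed b] by blast
  have "z \<le> Sup (e ` ldiv a ` insert bot U')"
    using zab sup_hom_le_Sup_image[where f = "ldiv a", OF ldiv_sup U'(1,3)] by (rule order_trans)
  then obtain c where c: "c \<in> insert bot U'" and zac: "z \<le> e (ldiv a c)"
    using compl_join_irred_le_Sup_image[OF z] by blast
  show ?thesis
  proof (cases "c = bot")
    case True
    have "e (ldiv a bot) \<le> ldiv_pi e ldiv y bot" using a by (rule e_ldiv_le_ldiv_pi) simp
    then show ?thesis using zac True by (blast intro: order_trans)
  next
    case False
    then have "c \<in> U" using c U'(2) by blast
    moreover have "e (ldiv a c) \<le> ldiv_KO e ldiv y (e c)" using a by (rule e_ldiv_le_ldiv_KO) simp
    ultimately show ?thesis using zac by (blast intro: order_trans)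
  qed
qed

lemma le_ldiv_pi_SupD:
  assumes ldiv_sup: "\<And>a b c. ldiv a (sup b c) = sup (ldiv a b) (ldiv a c)"
    and y: "y \<in> closed_elems e" and z: "compl_join_irred z"
    and nonzero: "\<not> z \<le> ldiv_pi e ldiv y bot"
    and le: "z \<le> ldiv_pi e ldiv y (Sup S)"
  shows "\<exists>s\<in>S. z \<le> ldiv_pi e ldiv y s"
proof (rule ccontr)
  let ?U = "{b. \<not> z \<le> ldiv_KO e ldiv y (e b)}"
  assume "\<not> ?thesis"
  then have "Sup S \<le> Sup (e ` ?U)" using not_le_ldiv_pi_imp_le_Sup by (blast intro: Sup_least)
  then have "z \<le> ldiv_pi e ldiv y (Sup (e ` ?U))" using le ldiv_pi_mono_right order_trans by blast
  then show False
    using le_ldiv_pi_Sup_image_cases[where ldiv = ldiv, OF ldiv_sup y z] nonzero by blast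
qed

end

theorem corollary2p6:
  fixes ldiv rdiv :: "'a::{distrib_lattice,bounded_lattice} \<Rightarrow> 'a \<Rightarrow> 'a"
    and e :: "'a \<Rightarrow> 'c::complete_lattice"
    and mult :: "'c \<Rightarrow> 'c \<Rightarrow> 'c"
  assumes ra: "residuation_algebra ldiv rdiv"
    and ce: "canonical_extension e"
    and mult_res: "\<And>u v w. (v \<le> ldiv_pi e ldiv u w \<longleftrightarrow> mult u v \<le> w)
                          \<and> (mult u v \<le> w \<longleftrightarrow> u \<le> rdiv_pi e rdiv w v)"
    and no_zero_div: "\<And>x y. compl_join_irred x \<Longrightarrow> compl_join_irred y \<Longrightarrow> mult x y \<noteq> bot"
    and distr: "\<And>a b c. ldiv a (sup b c) \<le> sup (ldiv a b) (ldiv a c)"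
  shows "\<forall>y z. compl_join_irred y \<longrightarrow> compl_join_irred z \<longrightarrow> compl_join_irred (mult y z)"
proof (intro allI impI)
  interpret canonical_embedding e using ce by unfold_locales
  fix y z :: 'c
  assume y: "compl_join_irred y" and z: "compl_join_irred z"
  have ldiv_sup: "\<And>a b c. ldiv a (sup b c) = sup (ldiv a b) (ldiv a c)"
    using residuation_algebra_ldiv_sup[OF ra distr] .
  have nonzero: "\<not> z \<le> ldiv_pi e ldiv y bot"
    using mult_res no_zero_div[OF y z] bot_unique by blast
  show "compl_join_irred (mult y z)"
  proof (rule compl_join_irred_if_join_prime)
    fix S assume "mult y z \<le> Sup S"
    then have "z \<le> ldiv_pi e ldiv y (Sup S)" using mult_res by blast
    then obtain s where "s \<in> S" "z \<le> ldiv_pi e ldiv y s"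
      using le_ldiv_pi_SupD[where ldiv = ldiv, OF ldiv_sup compl_join_irred_closed[OF y] z nonzero]
      by blast
    then show "\<exists>s\<in>S. mult y z \<le> s" using mult_res by blast
  qed
qed

end
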